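(* Let $\Bbbk$ be an algebraically closed field of characteristic zero, let $p_0=0\le p_1\le\dots\le p_{m+n}$ be integers, and let $\Upsilon=(|1|,\dots,|m+n|)$ be a sequence consisting of $m$ zeros and $n$ ones. Given $a_i^{(r)}\in\Bbbk$ for $1\le i\le m+n$ and $1\le r\le p_i-p_{i-1}$, there exist $b_{i,j}\in\Bbbk$ for $1\le i\le m+n$, $1\le j\le p_i$, such that $$b_{i,p_i-p_{i-1}+r}=b_{i-1,r}\quad\text{for }1\le r\le p_{i-1},$$ $$e_r\big((-1)^{|i|}b_{i,1},\dots,(-1)^{|i|}b_{i,p_i}\big)=(-1)^{r|i|}a_i^{(r)}\quad\text{for }1\le r\le p_i-p_{i-1},$$ where $e_r$ denotes the $r$-th elementary symmetric polynomial. *)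

theory Defs
  imports "HOL-Computational_Algebra.Polynomial"
begin

definition esym :: "nat \<Rightarrow> 'a::comm_ring_1 list \<Rightarrow> 'a" where
  "esym r xs = (\<Sum>S\<in>{S. S \<subseteq> {0..<length xs} \<and> card S = r}. \<Prod>i\<in>S. xs ! i)"

end

theory Submission
  imports Defs
begin

text \<open>The elementary symmetric values of a list \<open>xs\<close> are the coefficients of
  \<open>\<Prod>x\<leftarrow>xs. 1 + x X\<close>. Prepending \<open>d\<close> new entries to a list \<open>ys\<close> multiplies this
  polynomial by one of degree at most \<open>d\<close> with constant term 1, and by a triangular
  solve such a factor can be chosen to give the product any prescribed coefficients
  in degrees \<open>1..d\<close>; over an algebraically closed field every such factor splits into
  \<open>d\<close> factors \<open>1 + x X\<close>. Building the rows one at a time, each row extending the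
  previous one at the front, gives the theorem for trivial parities, and the signs
  \<open>(-1)^|i|\<close> are absorbed by the homogeneity \<open>e\<^sub>r(c x) = c^r e\<^sub>r(x)\<close>.\<close>

definition esym_poly :: "'a::comm_ring_1 list \<Rightarrow> 'a poly" where
  "esym_poly xs = (\<Prod>x\<leftarrow>xs. [:1, x:])"

lemma esym_poly_Nil [simp]: "esym_poly [] = 1"
  by (simp add: esym_poly_def)

lemma esym_poly_Cons [simp]: "esym_poly (x # xs) = [:1, x:] * esym_poly xs"
  by (simp add: esym_poly_def)

lemma esym_poly_append: "esym_poly (xs @ ys) = esym_poly xs * esym_poly ys"
  by (simp add: esym_poly_def)

lemma coeff_0_esym_poly [simp]: "coeff (esym_poly xs) 0 = 1"
  by (induction xs) (simp_all add: coeff_mult_0)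

lemma prod_monom_1: "finite A \<Longrightarrow> (\<Prod>i\<in>A. monom (f i) 1) = monom (\<Prod>i\<in>A. f i) (card A)"
  by (induction A rule: finite_induct) (simp_all add: mult_monom)

lemma esym_eq_coeff_esym_poly: "esym r xs = coeff (esym_poly xs) r"
proof -
  let ?I = "{..<length xs}"
  have "esym_poly xs = (\<Prod>i\<in>?I. monom (xs ! i) 1 + 1)"
    unfolding esym_poly_def prod.list_conv_set_nth atLeast0LessThan
    by (intro prod.cong refl) (auto simp: monom_altdef one_pCons)
  also have "\<dots> = (\<Sum>S\<in>Pow ?I. monom (\<Prod>i\<in>S. xs ! i) (card S))"
    by (subst prod_add) (auto intro!: sum.cong prod_monom_1 intro: finite_subset simp del: One_nat_def)
  finally have "coeff (esym_poly xs) r = (\<Sum>S\<in>Pow ?I. if card S = r then \<Prod>i\<in>S. xs ! i else 0)"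
    by (simp add: coeff_sum coeff_monom)
  also have "\<dots> = (\<Sum>S\<in>{S. S \<subseteq> {0..<length xs} \<and> card S = r}. \<Prod>i\<in>S. xs ! i)"
    by (simp add: sum.inter_filter[symmetric] Pow_def atLeast0LessThan)
  finally show ?thesis
    by (simp add: esym_def)
qed

lemma esym_map_mult: "esym r (map ((*) c) xs) = c ^ r * esym r xs"
proof -
  have "(\<Prod>i\<in>S. map ((*) c) xs ! i) = c ^ r * (\<Prod>i\<in>S. xs ! i)"
    if "S \<subseteq> {0..<length xs}" "card S = r" for S
    using that by (auto simp: prod.distrib subset_eq intro!: prod.cong)
  then show ?thesis
    by (simp add: esym_def sum_distrib_left)
qed

lemma exists_factor_with_prescribed_coeffs:
  fixes R :: "'a::field poly"
  assumes R0: "coeff R 0 = 1"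
  shows "\<exists>Q. degree Q \<le> d \<and> coeff Q 0 = 1 \<and> (\<forall>r\<in>{1..d}. coeff (Q * R) r = c r)"
proof (induction d)
  case 0
  show ?case by (intro exI[of _ 1]) auto
next
  case (Suc d)
  then obtain Q where Q: "degree Q \<le> d" "coeff Q 0 = 1" "\<forall>r\<in>{1..d}. coeff (Q * R) r = c r"
    by blast
  define Q' where "Q' = Q + monom (c (Suc d) - coeff (Q * R) (Suc d)) (Suc d)"
  have coeff_Q'R: "coeff (Q' * R) r = coeff (Q * R) r
      + (if Suc d \<le> r then (c (Suc d) - coeff (Q * R) (Suc d)) * coeff R (r - Suc d) else 0)" for r
    by (simp add: Q'_def distrib_right coeff_monom_mult)
  have "degree Q' \<le> Suc d"
    unfolding Q'_def using Q(1) by (intro degree_add_le) (auto intro: order.trans[OF degree_monom_le])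
  moreover have "coeff Q' 0 = 1"
    using Q(2) by (simp add: Q'_def)
  moreover have "\<forall>r\<in>{1..Suc d}. coeff (Q' * R) r = c r"
    using Q(3) R0 by (auto simp: coeff_Q'R le_Suc_eq)
  ultimately show ?case by blast
qed

lemma exists_esym_poly_eq:
  fixes Q :: "'a::alg_closed_field poly"
  assumes "degree Q \<le> d" and "coeff Q 0 = 1"
  shows "\<exists>xs. length xs = d \<and> esym_poly xs = Q"
  using assms
proof (induction d arbitrary: Q)
  case 0
  then have "Q = 1"
    using degree_0_id[of Q] by (simp add: one_pCons)
  then show ?case by simp
next
  case (Suc d)
  show ?case
  proof (cases "degree Q = 0")
    case True
    with Suc.prems obtain ys where "length ys = d" "esym_poly ys = Q"
      using Suc.IH[of Q] by auto
    then show ?thesis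
      by (intro exI[of _ "0 # ys"]) (simp add: one_pCons[symmetric])
  next
    case False
    then obtain z where "poly Q z = 0"
      using alg_closed_imp_poly_has_root by blast
    then obtain S where S: "Q = [:-z, 1:] * S"
      by (auto simp: poly_eq_0_iff_dvd)
    have "- z * coeff S 0 = 1"
      using Suc.prems(2) by (simp add: S coeff_mult_0)
    then have z: "z \<noteq> 0" and "S \<noteq> 0" and S0: "coeff (smult (- z) S) 0 = 1"
      by auto
    then have degree_Q: "degree Q = Suc (degree S)"
      unfolding S by (subst degree_mult_eq) auto
    have "Q = [:1, - 1 / z:] * smult (- z) S"
      using z by (simp add: S mult_smult_right[symmetric] smult_add_right)
    moreover have "degree (smult (- z) S) \<le> d"
      using Suc.prems(1) degree_Q by simp
    then obtain ys where "length ys = d" "esym_poly ys = smult (- z) S"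
      using Suc.IH S0 by blast
    ultimately show ?thesis
      by (intro exI[of _ "- 1 / z # ys"]) simp
  qed
qed

lemma exists_esym_prefix:
  fixes ys :: "'a::alg_closed_field list"
  shows "\<exists>xs. length xs = d \<and> (\<forall>r\<in>{1..d}. esym r (xs @ ys) = c r)"
proof -
  obtain Q where Q: "degree Q \<le> d" "coeff Q 0 = 1" "\<forall>r\<in>{1..d}. coeff (Q * esym_poly ys) r = c r"
    using exists_factor_with_prescribed_coeffs[OF coeff_0_esym_poly] by blast
  obtain xs where "length xs = d" "esym_poly xs = Q"
    using exists_esym_poly_eq[OF Q(1,2)] by blast
  then show ?thesis
    using Q(3) by (auto simp: esym_eq_coeff_esym_poly esym_poly_append)
qed

lemma exists_nested_esym_lists:
  fixes c :: "nat \<Rightarrow> nat \<Rightarrow> 'a::alg_closed_field"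
  shows "\<exists>L. L 0 = [] \<and> (\<forall>i. \<exists>xs. length xs = d i \<and> L (Suc i) = xs @ L i
           \<and> (\<forall>r\<in>{1..d i}. esym r (L (Suc i)) = c i r))"
proof -
  have "\<forall>i ys. \<exists>xs. length xs = d i \<and> (\<forall>r\<in>{1..d i}. esym r (xs @ ys) = c i r)"
    using exists_esym_prefix by blast
  then obtain ext where ext: "\<And>i ys. length (ext i ys) = d i
      \<and> (\<forall>r\<in>{1..d i}. esym r (ext i ys @ ys) = c i r)"
    by metis
  show ?thesis
    using ext by (intro exI[of _ "rec_nat [] (\<lambda>i ys. ext i ys @ ys)"]) auto
qed

lemma exists_nested_esym_rows:
  fixes a :: "nat \<Rightarrow> nat \<Rightarrow> 'a::alg_closed_field"
  assumes p0: "p 0 = 0" and pmono: "\<And>i. 1 \<le> i \<Longrightarrow> i \<le> N \<Longrightarrow> p (i - 1) \<le> p i"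
  shows "\<exists>b. (\<forall>i\<in>{1..N}. \<forall>r\<in>{1..p (i - 1)}. b i (p i - p (i - 1) + r) = b (i - 1) r) \<and>
     (\<forall>i\<in>{1..N}. \<forall>r\<in>{1..p i - p (i - 1)}. esym r (map (b i) [1..<p i + 1]) = a i r)"
proof -
  obtain L where L0: "L 0 = []" and L: "\<And>k. \<exists>xs. length xs = p (Suc k) - p k
      \<and> L (Suc k) = xs @ L k \<and> (\<forall>r\<in>{1..p (Suc k) - p k}. esym r (L (Suc k)) = a (Suc k) r)"
    using exists_nested_esym_lists[of "\<lambda>k. p (Suc k) - p k" "\<lambda>k. a (Suc k)"] by blast
  have length_L: "length (L i) = p i" if "i \<le> N" for i
    using that
  proof (induction i)
    case (Suc k)
    then show ?case
      using L[of k] pmono[of "Suc k"] by auto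
  qed (simp add: L0 p0)
  define b where "b i j = L i ! (j - 1)" for i j
  have "b i (p i - p (i - 1) + r) = b (i - 1) r" if i: "i \<in> {1..N}" and r: "r \<in> {1..p (i - 1)}" for i r
  proof -
    obtain k where k: "i = Suc k"
      using i gr0_conv_Suc by auto
    obtain xs where xs: "length xs = p i - p (i - 1)" "L i = xs @ L (i - 1)"
      using L[of k] k by auto
    have "p i - p (i - 1) + r - 1 = length xs + (r - 1)"
      using xs(1) r by simp
    then show ?thesis
      by (simp add: b_def xs(2) nth_append_length_plus)
  qed
  moreover have "esym r (map (b i) [1..<p i + 1]) = a i r"
    if i: "i \<in> {1..N}" and r: "r \<in> {1..p i - p (i - 1)}" for i r
  proof -
    obtain k where k: "i = Suc k"
      using i gr0_conv_Suc by auto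
    have "map (b i) [1..<p i + 1] = L i"
      using length_L[of i] i by (intro nth_equalityI) (auto simp: b_def simp del: upt_Suc)
    then show ?thesis
      using L[of k] k r by auto
  qed
  ultimately show ?thesis by blast
qed

theorem mainTheorem8:
  fixes m n :: nat
    and p :: "nat \<Rightarrow> nat"
    and par :: "nat \<Rightarrow> nat"
    and a :: "nat \<Rightarrow> nat \<Rightarrow> 'k::{alg_closed_field, field_char_0}"
  assumes p0: "p 0 = 0"
    and pmono: "\<And>i. 1 \<le> i \<Longrightarrow> i \<le> m + n \<Longrightarrow> p (i - 1) \<le> p i"
    and par01: "\<And>i. 1 \<le> i \<Longrightarrow> i \<le> m + n \<Longrightarrow> par i \<in> {0, 1}"
    and parcount: "card {i \<in> {1..m+n}. par i = 1} = n"
  shows "\<exists>b :: nat \<Rightarrow> nat \<Rightarrow> 'k.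
     (\<forall>i\<in>{1..m+n}. \<forall>r\<in>{1..p (i - 1)}. b i (p i - p (i - 1) + r) = b (i - 1) r) \<and>
     (\<forall>i\<in>{1..m+n}. \<forall>r\<in>{1..p i - p (i - 1)}.
        esym r (map (\<lambda>j. (-1) ^ par i * b i j) [1..<p i + 1]) = (-1) ^ (r * par i) * a i r)"
proof -
  obtain b :: "nat \<Rightarrow> nat \<Rightarrow> 'k" where
    nested: "\<forall>i\<in>{1..m+n}. \<forall>r\<in>{1..p (i - 1)}. b i (p i - p (i - 1) + r) = b (i - 1) r" and
    esym_b: "\<forall>i\<in>{1..m+n}. \<forall>r\<in>{1..p i - p (i - 1)}. esym r (map (b i) [1..<p i + 1]) = a i r"
    using exists_nested_esym_rows[of p "m + n" a, OF p0 pmono] by blast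
  have sign: "esym r (map (\<lambda>j. (-1) ^ par i * b i j) js) = (-1) ^ (r * par i) * esym r (map (b i) js)"
    for i r js
    using esym_map_mult[of r "(-1) ^ par i" "map (b i) js"]
    by (simp add: power_mult[symmetric] mult.commute o_def)
  show ?thesis
    using nested esym_b by (intro exI[of _ b]) (simp add: sign del: upt_Suc)
qed

end
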